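(* Let $\mathbb{C}$ be a locally small category and $\mathbb{C}_{\mathit{fin}}$ a full subcategory satisfying (C1)–(C5) below. Let $U:\mathbb{C}^*\to\mathbb{C}$ be a reasonable precompact expansion with unique restrictions, and let $F\in\mathrm{Ob}(\mathbb{C})$ be a locally finite object. Then $$\mathrm{Aut}(F)\times U^{-1}(F)\to U^{-1}(F):(g,\mathcal{F})\mapsto\mathcal{F}^g$$ is a continuous group action with respect to the topologies $\tau_F$ on $\mathrm{Aut}(F)$ and $\sigma_F$ on $U^{-1}(F)$.
   Context: Write $A\to B$ if $\hom(A,B)\ne\varnothing$. Conditions: (C1) all morphisms of $\mathbb{C}$ are monomorphisms; (C2) $\mathrm{Ob}(\mathbb{C}_{\mathit{fin}})$ is a set; (C3) $\hom(A,B)$ is finite for $A,B\in\mathrm{Ob}(\mathbb{C}_{\mathit{fin}})$; (C4) for every $F\in\mathrm{Ob}(\mathbb{C})$ there is $A\in\mathrm{Ob}(\mathbb{C}_{\mathit{fin}})$ with $A\to F$; (C5) for every $B\in\mathrm{Ob}(\mathbb{C}_{\mathit{fin}})$ the set $\{A\in\mathrm{Ob}(\mathbb{C}_{\mathit{fin}}):A\to B\}$ is finite. $F$ is locally finite if for all $A,B\in\mathrm{Ob}(\mathbb{C}_{\mathit{fin}})$, $e\in\hom(A,F)$, $f\in\hom(B,F)$ there exist $D\in\mathrm{Ob}(\mathbb{C}_{\mathit{fin}})$, $r\in\hom(D,F)$, $p\in\hom(A,D)$, $q\in\hom(B,D)$ with $r\cdot p=e$, $r\cdot q=f$, such that for every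 $H\in\mathrm{Ob}(\mathbb{C})$, $r'\in\hom(H,F)$, $p'\in\hom(A,H)$, $q'\in\hom(B,H)$ with $r'\cdot p'=e$, $r'\cdot q'=f$ there is $s\in\hom(D,H)$ with $r'\cdot s=r$, $s\cdot p=p'$, $s\cdot q=q'$. An expansion of $\mathbb{C}$ is a locally small category $\mathbb{C}^*$ with a functor $U:\mathbb{C}^*\to\mathbb{C}$ surjective on objects and injective on hom-sets; we regard $\hom_{\mathbb{C}^*}(\mathcal{A},\mathcal{B})\subseteq\hom_{\mathbb{C}}(U\mathcal{A},U\mathcal{B})$, and $U^{-1}(A)=\{\mathcal{A}:U(\mathcal{A})=A\}$. $U$ is reasonable if for every $e\in\hom(A,B)$ and $\mathcal{A}\in U^{-1}(A)$ there is $\mathcal{B}\in U^{-1}(B)$ with $e\in\hom(\mathcal{A},\mathcal{B})$; it has unique restrictions if for every $\mathcal{B}$ and $e\in\hom(A,U(\mathcal{B}))$ there is exactly one $\mathcal{A}\in U^{-1}(A)$ with $e\in\hom(\mathcal{A},\mathcal{B})$; it is precompact if $U^{-1}(A)$ is a set for every $A$ and finite for $A\in\mathrm{Ob}(\mathbb{C}_{\mathit{fin}})$. For $g\in\mathrm{Aut}(F)$ and $\mathcal{F}\in U^{-1}(F)$, $\mathcal{F}^g$ denotes the unique $\mathcal{F}'\in U^{-1}(F)$ with $g^{-1}\in\hom(\mathcal{F},\mathcal{F}')$ (for a reasonable expansion with unique restrictions such an element exists and is unique). $\tau_F$ is the topology on $\mathrm{Aut}(F)$ generated by the sets $\{f\in\mathrm{Aut}(F):f\cdot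 e_1=e_2\}$, $A\in\mathrm{Ob}(\mathbb{C}_{\mathit{fin}})$, $e_1,e_2\in\hom(A,F)$. $\sigma_F$ is the topology on $U^{-1}(F)$ generated by the sets $N(e,\mathcal{A})=\{\mathcal{F}\in U^{-1}(F):e\in\hom(\mathcal{A},\mathcal{F})\}$ for $\mathcal{A}\in\mathrm{Ob}(\mathbb{C}^* )$ with $U(\mathcal{A})\in\mathrm{Ob}(\mathbb{C}_{\mathit{fin}})$ and $e\in\hom(U(\mathcal{A}),F)$. *)

theory Defs
  imports "HOL-Analysis.Analysis"
begin

record ('o, 'm) cat =
  Ob :: "'o set"
  Arr :: "'m set"
  dom :: "'m \<Rightarrow> 'o"
  cod :: "'m \<Rightarrow> 'o"
  comp :: "'m \<Rightarrow> 'm \<Rightarrow> 'm"   (* comp C g f  =  g \<cdot> f  (first f, then g) *)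
  ident :: "'o \<Rightarrow> 'm"

definition hom :: "('o, 'm) cat \<Rightarrow> 'o \<Rightarrow> 'o \<Rightarrow> 'm set" where
  "hom C A B = {f \<in> Arr C. dom C f = A \<and> cod C f = B}"

definition category :: "('o, 'm) cat \<Rightarrow> bool" where
  "category C \<longleftrightarrow>
     (\<forall>f \<in> Arr C. dom C f \<in> Ob C \<and> cod C f \<in> Ob C) \<and>
     (\<forall>A \<in> Ob C. ident C A \<in> hom C A A) \<and>
     (\<forall>A \<in> Ob C. \<forall>B \<in> Ob C. \<forall>D \<in> Ob C. \<forall>f \<in> hom C A B. \<forall>g \<in> hom C B D.
        comp C g f \<in> hom C A D) \<and>
     (\<forall>f \<in> Arr C. comp C f (ident C (dom C f)) = f \<and> comp C (ident C (cod C f)) f = f) \<and>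
     (\<forall>f \<in> Arr C. \<forall>g \<in> Arr C. \<forall>h \<in> Arr C. dom C g = cod C f \<longrightarrow> dom C h = cod C g \<longrightarrow>
        comp C h (comp C g f) = comp C (comp C h g) f)"

definition mono :: "('o, 'm) cat \<Rightarrow> 'm \<Rightarrow> bool" where
  "mono C f \<longleftrightarrow> f \<in> Arr C \<and>
     (\<forall>g \<in> Arr C. \<forall>h \<in> Arr C. dom C g = dom C h \<longrightarrow> cod C g = dom C f \<longrightarrow> cod C h = dom C f
        \<longrightarrow> comp C f g = comp C f h \<longrightarrow> g = h)"

definition Aut :: "('o, 'm) cat \<Rightarrow> 'o \<Rightarrow> 'm set" where
  "Aut C F = {f \<in> hom C F F. \<exists>g \<in> hom C F F. comp C g f = ident C F \<and> comp C f g = ident C F}"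

definition inv_arr :: "('o, 'm) cat \<Rightarrow> 'm \<Rightarrow> 'm" where
  "inv_arr C f = (THE g. g \<in> hom C (cod C f) (dom C f) \<and>
       comp C g f = ident C (dom C f) \<and> comp C f g = ident C (cod C f))"

section \<open>Conditions (C1)--(C5) on a full subcategory given by its object set Fin\<close>

definition conditions_C1_C5 :: "('o, 'm) cat \<Rightarrow> 'o set \<Rightarrow> bool" where
  "conditions_C1_C5 C Fin \<longleftrightarrow>
     Fin \<subseteq> Ob C \<and>
     (\<forall>f \<in> Arr C. mono C f) \<and>
     (\<forall>A \<in> Fin. \<forall>B \<in> Fin. finite (hom C A B)) \<and>
     (\<forall>F \<in> Ob C. \<exists>A \<in> Fin. hom C A F \<noteq> {}) \<and>
     (\<forall>B \<in> Fin. finite {A \<in> Fin. hom C A B \<noteq> {}})"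

definition locally_finite :: "('o, 'm) cat \<Rightarrow> 'o set \<Rightarrow> 'o \<Rightarrow> bool" where
  "locally_finite C Fin F \<longleftrightarrow>
     (\<forall>A \<in> Fin. \<forall>B \<in> Fin. \<forall>e \<in> hom C A F. \<forall>f \<in> hom C B F.
       \<exists>D \<in> Fin. \<exists>r \<in> hom C D F. \<exists>p \<in> hom C A D. \<exists>q \<in> hom C B D.
         comp C r p = e \<and> comp C r q = f \<and>
         (\<forall>H \<in> Ob C. \<forall>r' \<in> hom C H F. \<forall>p' \<in> hom C A H. \<forall>q' \<in> hom C B H.
            comp C r' p' = e \<and> comp C r' q' = f \<longrightarrow>
            (\<exists>s \<in> hom C D H. comp C r' s = r \<and> comp C s p = p' \<and> comp C s q = q')))"

text \<open>An expansion is given by its object set ObS (objects of type 'p), the functor U on objects,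
  and hom-sets homS X Y, regarded (via the faithful functor U) as subsets of hom C (U X) (U Y);
  composition and identities are those of C.\<close>

definition expansion :: "('o, 'm) cat \<Rightarrow> 'p set \<Rightarrow> ('p \<Rightarrow> 'p \<Rightarrow> 'm set) \<Rightarrow> ('p \<Rightarrow> 'o) \<Rightarrow> bool" where
  "expansion C ObS homS U \<longleftrightarrow>
     U ` ObS = Ob C \<and>
     (\<forall>X \<in> ObS. \<forall>Y \<in> ObS. homS X Y \<subseteq> hom C (U X) (U Y)) \<and>
     (\<forall>X \<in> ObS. ident C (U X) \<in> homS X X) \<and>
     (\<forall>X \<in> ObS. \<forall>Y \<in> ObS. \<forall>Z \<in> ObS. \<forall>f \<in> homS X Y. \<forall>g \<in> homS Y Z. comp C g f \<in> homS X Z)"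

definition fibre :: "'p set \<Rightarrow> ('p \<Rightarrow> 'o) \<Rightarrow> 'o \<Rightarrow> 'p set" where
  "fibre ObS U A = {X \<in> ObS. U X = A}"

definition reasonable :: "('o, 'm) cat \<Rightarrow> 'p set \<Rightarrow> ('p \<Rightarrow> 'p \<Rightarrow> 'm set) \<Rightarrow> ('p \<Rightarrow> 'o) \<Rightarrow> bool" where
  "reasonable C ObS homS U \<longleftrightarrow>
     (\<forall>A \<in> Ob C. \<forall>B \<in> Ob C. \<forall>e \<in> hom C A B. \<forall>X \<in> fibre ObS U A.
        \<exists>Y \<in> fibre ObS U B. e \<in> homS X Y)"

definition unique_restrictions :: "('o, 'm) cat \<Rightarrow> 'p set \<Rightarrow> ('p \<Rightarrow> 'p \<Rightarrow> 'm set) \<Rightarrow> ('p \<Rightarrow> 'o) \<Rightarrow> bool" where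
  "unique_restrictions C ObS homS U \<longleftrightarrow>
     (\<forall>Y \<in> ObS. \<forall>A \<in> Ob C. \<forall>e \<in> hom C A (U Y). \<exists>!X. X \<in> fibre ObS U A \<and> e \<in> homS X Y)"

definition precompact :: "'o set \<Rightarrow> 'p set \<Rightarrow> ('p \<Rightarrow> 'o) \<Rightarrow> bool" where
  "precompact Fin ObS U \<longleftrightarrow> (\<forall>A \<in> Fin. finite (fibre ObS U A))"

definition exp_act :: "('o, 'm) cat \<Rightarrow> 'p set \<Rightarrow> ('p \<Rightarrow> 'p \<Rightarrow> 'm set) \<Rightarrow> ('p \<Rightarrow> 'o) \<Rightarrow> 'o \<Rightarrow> 'p \<Rightarrow> 'm \<Rightarrow> 'p" where
  "exp_act C ObS homS U F X g = (THE X'. X' \<in> fibre ObS U F \<and> inv_arr C g \<in> homS X X')"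

definition tau :: "('o, 'm) cat \<Rightarrow> 'o set \<Rightarrow> 'o \<Rightarrow> 'm topology" where
  "tau C Fin F = topology_generated_by
     (insert (Aut C F) {{f \<in> Aut C F. comp C f e1 = e2} | A e1 e2.
        A \<in> Fin \<and> e1 \<in> hom C A F \<and> e2 \<in> hom C A F})"

definition sigma :: "('o, 'm) cat \<Rightarrow> 'o set \<Rightarrow> 'p set \<Rightarrow> ('p \<Rightarrow> 'p \<Rightarrow> 'm set) \<Rightarrow> ('p \<Rightarrow> 'o) \<Rightarrow> 'o \<Rightarrow> 'p topology" where
  "sigma C Fin ObS homS U F = topology_generated_by
     (insert (fibre ObS U F) {{Y \<in> fibre ObS U F. e \<in> homS X Y} | X e.
        X \<in> ObS \<and> U X \<in> Fin \<and> e \<in> hom C (U X) F})"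

end

theory Submission
  imports Defs
begin

text \<open>Unique restrictions force the inverse of an automorphism k of F to lie in homS Y X whenever
  k lies in homS X Y (restrict X along the inverse of k and compare with the identity on Y).
  Hence X^g, the target of the inverse of g out of X, is well defined, and the action laws
  follow from inv (g h) = inv h inv g. For continuity, e \<in> homS A X^g iff g e \<in> homS A X,
  so the preimage of the basic open set N(e, A) is the union over e' of the open boxes
  {g. g e = e'} \<times> N(e', A).\<close>

locale Category =
  fixes C :: "('o, 'm) cat"
  assumes category: "category C"
begin

lemma hom_Ob: "f \<in> hom C A B \<Longrightarrow> A \<in> Ob C \<and> B \<in> Ob C"
  using category unfolding category_def hom_def by blast

lemma comp_in_hom: "f \<in> hom C A B \<Longrightarrow> g \<in> hom C B D \<Longrightarrow> comp C g f \<in> hom C A D"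
  using category hom_Ob unfolding category_def by blast

lemma ident_in_hom: "A \<in> Ob C \<Longrightarrow> ident C A \<in> hom C A A"
  using category unfolding category_def by blast

lemma comp_ident_left: "f \<in> hom C A B \<Longrightarrow> comp C (ident C B) f = f"
  using category unfolding category_def hom_def by auto

lemma comp_ident_right: "f \<in> hom C A B \<Longrightarrow> comp C f (ident C A) = f"
  using category unfolding category_def hom_def by auto

lemma comp_assoc:
  "f \<in> hom C A B \<Longrightarrow> g \<in> hom C B D \<Longrightarrow> h \<in> hom C D E \<Longrightarrow>
   comp C h (comp C g f) = comp C (comp C h g) f"
  using category unfolding category_def hom_def by auto

lemma inv_arr_eqI:
  assumes f: "f \<in> hom C A B" and g: "g \<in> hom C B A"
    and left: "comp C g f = ident C A" and right: "comp C f g = ident C B"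
  shows "inv_arr C f = g"
  unfolding inv_arr_def
proof (rule the_equality)
  show "g \<in> hom C (cod C f) (dom C f) \<and> comp C g f = ident C (dom C f) \<and> comp C f g = ident C (cod C f)"
    using f g left right by (simp add: hom_def)
next
  fix h
  assume "h \<in> hom C (cod C f) (dom C f) \<and> comp C h f = ident C (dom C f) \<and> comp C f h = ident C (cod C f)"
  then have h: "h \<in> hom C B A" and hf: "comp C h f = ident C A"
    using f by (auto simp: hom_def)
  have "h = comp C h (comp C f g)"
    using comp_ident_right[OF h] right by simp
  also have "\<dots> = comp C (comp C h f) g"
    using comp_assoc[OF g f h] .
  also have "\<dots> = g"
    using hf comp_ident_left[OF g] by simp
  finally show "h = g" .
qed

lemma Aut_in_hom: "g \<in> Aut C F \<Longrightarrow> g \<in> hom C F F"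
  by (simp add: Aut_def)

lemma Aut_inv_arr:
  assumes "g \<in> Aut C F"
  shows "inv_arr C g \<in> Aut C F \<and> comp C (inv_arr C g) g = ident C F \<and> comp C g (inv_arr C g) = ident C F"
proof -
  obtain k where k: "k \<in> hom C F F" "comp C k g = ident C F" "comp C g k = ident C F"
    and g: "g \<in> hom C F F"
    using assms unfolding Aut_def by blast
  have "inv_arr C g = k"
    using inv_arr_eqI[OF g k] .
  moreover have "k \<in> Aut C F"
    unfolding Aut_def using k g by blast
  ultimately show ?thesis
    using k by simp
qed

lemma inv_arr_in_Aut: "g \<in> Aut C F \<Longrightarrow> inv_arr C g \<in> Aut C F"
  using Aut_inv_arr by blast

lemma comp_inv_arr_left: "g \<in> Aut C F \<Longrightarrow> comp C (inv_arr C g) g = ident C F"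
  using Aut_inv_arr by blast

lemma comp_inv_arr_right: "g \<in> Aut C F \<Longrightarrow> comp C g (inv_arr C g) = ident C F"
  using Aut_inv_arr by blast

lemma inv_arr_inv_arr: "g \<in> Aut C F \<Longrightarrow> inv_arr C (inv_arr C g) = g"
  using inv_arr_eqI Aut_in_hom inv_arr_in_Aut comp_inv_arr_left comp_inv_arr_right by blast

lemma inv_arr_comp_cancel:
  assumes "g \<in> Aut C F" and "e \<in> hom C A F"
  shows "comp C (inv_arr C g) (comp C g e) = e"
  using comp_assoc[OF assms(2) Aut_in_hom[OF assms(1)] Aut_in_hom[OF inv_arr_in_Aut[OF assms(1)]]]
    comp_inv_arr_left[OF assms(1)] comp_ident_left[OF assms(2)] by simp

lemma ident_in_Aut: "F \<in> Ob C \<Longrightarrow> ident C F \<in> Aut C F"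
  unfolding Aut_def using ident_in_hom comp_ident_left by blast

lemma inv_arr_ident: "F \<in> Ob C \<Longrightarrow> inv_arr C (ident C F) = ident C F"
  using inv_arr_eqI ident_in_hom comp_ident_left by blast

lemma Aut_comp:
  assumes g: "g \<in> Aut C F" and h: "h \<in> Aut C F"
  shows "comp C g h \<in> Aut C F \<and> inv_arr C (comp C g h) = comp C (inv_arr C h) (inv_arr C g)"
proof -
  let ?g' = "inv_arr C g" and ?h' = "inv_arr C h"
  have homs: "g \<in> hom C F F" "h \<in> hom C F F" "?g' \<in> hom C F F" "?h' \<in> hom C F F"
    using g h by (simp_all add: Aut_in_hom inv_arr_in_Aut)
  have gh: "comp C g h \<in> hom C F F" and hg': "comp C ?h' ?g' \<in> hom C F F"
    using homs comp_in_hom by blast+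
  have left: "comp C (comp C ?h' ?g') (comp C g h) = ident C F"
  proof -
    have "comp C (comp C ?h' ?g') (comp C g h) = comp C ?h' (comp C ?g' (comp C g h))"
      using comp_assoc[OF gh homs(3,4)] by simp
    also have "comp C ?g' (comp C g h) = h"
      using inv_arr_comp_cancel[OF g homs(2)] .
    finally show ?thesis
      using comp_inv_arr_left[OF h] by simp
  qed
  have right: "comp C (comp C g h) (comp C ?h' ?g') = ident C F"
  proof -
    have "comp C (comp C g h) (comp C ?h' ?g') = comp C g (comp C h (comp C ?h' ?g'))"
      using comp_assoc[OF hg' homs(2,1)] by simp
    also have "comp C h (comp C ?h' ?g') = ?g'"
      using inv_arr_comp_cancel[OF inv_arr_in_Aut[OF h] homs(3)] inv_arr_inv_arr[OF h] by simp
    finally show ?thesis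
      using comp_inv_arr_right[OF g] by simp
  qed
  show ?thesis
    using inv_arr_eqI[OF gh hg' left right] gh hg' left right unfolding Aut_def by blast
qed

end

lemma topspace_tau: "topspace (tau C Fin F) = Aut C F"
  unfolding tau_def by auto

lemma topspace_sigma: "topspace (sigma C Fin ObS homS U F) = fibre ObS U F"
  unfolding sigma_def by auto

lemma openin_tau_basic:
  "A \<in> Fin \<Longrightarrow> e1 \<in> hom C A F \<Longrightarrow> e2 \<in> hom C A F \<Longrightarrow> openin (tau C Fin F) {f \<in> Aut C F. comp C f e1 = e2}"
  unfolding tau_def by (rule topology_generated_by_Basis) blast

lemma openin_sigma_basic:
  "X \<in> ObS \<Longrightarrow> U X \<in> Fin \<Longrightarrow> e \<in> hom C (U X) F
   \<Longrightarrow> openin (sigma C Fin ObS homS U F) {Y \<in> fibre ObS U F. e \<in> homS X Y}"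
  unfolding sigma_def by (rule topology_generated_by_Basis) blast

locale reasonable_expansion = Category C for C :: "('o, 'm) cat" +
  fixes ObS :: "'p set" and homS :: "'p \<Rightarrow> 'p \<Rightarrow> 'm set" and U :: "'p \<Rightarrow> 'o"
  assumes expansion: "expansion C ObS homS U"
    and reasonable: "reasonable C ObS homS U"
    and unique_restrictions: "unique_restrictions C ObS homS U"
begin

abbreviation act :: "'o \<Rightarrow> 'p \<Rightarrow> 'm \<Rightarrow> 'p" where
  "act F X g \<equiv> exp_act C ObS homS U F X g"

lemma fibreD: "X \<in> fibre ObS U A \<Longrightarrow> X \<in> ObS \<and> U X = A \<and> A \<in> Ob C"
  using expansion unfolding fibre_def expansion_def by blast

lemma homS_comp:
  "X \<in> ObS \<Longrightarrow> Y \<in> ObS \<Longrightarrow> Z \<in> ObS \<Longrightarrow> f \<in> homS X Y \<Longrightarrow> g \<in> homS Y Z \<Longrightarrow> comp C g f \<in> homS X Z"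
  using expansion unfolding expansion_def by blast

lemma ident_in_homS: "X \<in> ObS \<Longrightarrow> ident C (U X) \<in> homS X X"
  using expansion unfolding expansion_def by blast

lemma homS_target_exists:
  "e \<in> hom C A B \<Longrightarrow> X \<in> fibre ObS U A \<Longrightarrow> \<exists>Y \<in> fibre ObS U B. e \<in> homS X Y"
  using reasonable hom_Ob unfolding reasonable_def by blast

lemma restriction_exists:
  "Y \<in> ObS \<Longrightarrow> e \<in> hom C A (U Y) \<Longrightarrow> \<exists>X \<in> fibre ObS U A. e \<in> homS X Y"
  using unique_restrictions hom_Ob unfolding unique_restrictions_def by blast

lemma restriction_unique:
  assumes "Y \<in> ObS" and "e \<in> hom C A (U Y)"
    and "X1 \<in> fibre ObS U A" "e \<in> homS X1 Y" and "X2 \<in> fibre ObS U A" "e \<in> homS X2 Y"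
  shows "X1 = X2"
  using unique_restrictions assms hom_Ob unfolding unique_restrictions_def by blast

lemma Aut_homS_inv_arr:
  assumes k: "k \<in> Aut C F" and X: "X \<in> fibre ObS U F" and Y: "Y \<in> fibre ObS U F"
    and kXY: "k \<in> homS X Y"
  shows "inv_arr C k \<in> homS Y X"
proof -
  have XO: "X \<in> ObS" "U X = F" "F \<in> Ob C" and YO: "Y \<in> ObS" "U Y = F"
    using X Y fibreD by blast+
  obtain Z where Z: "Z \<in> fibre ObS U F" "inv_arr C k \<in> homS Z X"
    using restriction_exists[OF XO(1)] Aut_in_hom[OF inv_arr_in_Aut[OF k]] XO(2) by blast
  have "comp C k (inv_arr C k) \<in> homS Z Y"
    using homS_comp[OF _ XO(1) YO(1) Z(2) kXY] Z(1) fibreD by blast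
  then have "ident C F \<in> homS Z Y"
    using comp_inv_arr_right[OF k] by simp
  moreover have "ident C F \<in> homS Y Y"
    using ident_in_homS[OF YO(1)] YO(2) by simp
  ultimately have "Z = Y"
    using restriction_unique[OF YO(1) _ Z(1) _ Y] ident_in_hom[OF XO(3)] YO(2) by simp
  then show ?thesis
    using Z(2) by simp
qed

lemma Aut_homS_target_unique:
  assumes k: "k \<in> Aut C F" and X: "X \<in> fibre ObS U F"
    and Y1: "Y1 \<in> fibre ObS U F" "k \<in> homS X Y1" and Y2: "Y2 \<in> fibre ObS U F" "k \<in> homS X Y2"
  shows "Y1 = Y2"
proof (rule restriction_unique)
  show "X \<in> ObS" and "inv_arr C k \<in> hom C F (U X)"
    using X fibreD Aut_in_hom[OF inv_arr_in_Aut[OF k]] by auto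
  show "inv_arr C k \<in> homS Y1 X" "inv_arr C k \<in> homS Y2 X"
    using Aut_homS_inv_arr[OF k X] Y1 Y2 by blast+
qed (use Y1 Y2 in blast)+

lemma exp_act_unique:
  assumes g: "g \<in> Aut C F" and X: "X \<in> fibre ObS U F"
  shows "\<exists>!Y. Y \<in> fibre ObS U F \<and> inv_arr C g \<in> homS X Y"
proof -
  have g': "inv_arr C g \<in> Aut C F"
    using inv_arr_in_Aut[OF g] .
  obtain Y where "Y \<in> fibre ObS U F" "inv_arr C g \<in> homS X Y"
    using homS_target_exists[OF Aut_in_hom[OF g'] X] by blast
  then show ?thesis
    using Aut_homS_target_unique[OF g' X] by blast
qed

lemma exp_act_in_fibre: "g \<in> Aut C F \<Longrightarrow> X \<in> fibre ObS U F \<Longrightarrow> act F X g \<in> fibre ObS U F"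
  unfolding exp_act_def using theI'[OF exp_act_unique] by blast

lemma inv_arr_in_homS_exp_act:
  "g \<in> Aut C F \<Longrightarrow> X \<in> fibre ObS U F \<Longrightarrow> inv_arr C g \<in> homS X (act F X g)"
  unfolding exp_act_def using theI'[OF exp_act_unique] by blast

lemma exp_act_eqI:
  "g \<in> Aut C F \<Longrightarrow> X \<in> fibre ObS U F \<Longrightarrow> Y \<in> fibre ObS U F \<Longrightarrow> inv_arr C g \<in> homS X Y
   \<Longrightarrow> act F X g = Y"
  unfolding exp_act_def using the1_equality[OF exp_act_unique] by blast

lemma exp_act_ident: "X \<in> fibre ObS U F \<Longrightarrow> act F X (ident C F) = X"
  using exp_act_eqI[OF ident_in_Aut] ident_in_homS inv_arr_ident fibreD by metis

lemma exp_act_comp: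
  assumes g: "g \<in> Aut C F" and h: "h \<in> Aut C F" and X: "X \<in> fibre ObS U F"
  shows "act F (act F X g) h = act F X (comp C g h)"
proof -
  let ?Xg = "act F X g"
  have Xg: "?Xg \<in> fibre ObS U F" and Xgh: "act F ?Xg h \<in> fibre ObS U F"
    using exp_act_in_fibre g h X by blast+
  have "comp C (inv_arr C h) (inv_arr C g) \<in> homS X (act F ?Xg h)"
    using homS_comp inv_arr_in_homS_exp_act[OF g X] inv_arr_in_homS_exp_act[OF h Xg] X Xg Xgh fibreD
    by blast
  then show ?thesis
    using exp_act_eqI[OF _ X Xgh] Aut_comp[OF g h] by simp
qed

lemma homS_exp_act_iff:
  assumes g: "g \<in> Aut C F" and X: "X \<in> fibre ObS U F" and A: "A \<in> ObS" and e: "e \<in> hom C (U A) F"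
  shows "e \<in> homS A (act F X g) \<longleftrightarrow> comp C g e \<in> homS A X"
proof
  have Xg: "act F X g \<in> fibre ObS U F"
    using exp_act_in_fibre[OF g X] .
  assume "e \<in> homS A (act F X g)"
  moreover have "g \<in> homS (act F X g) X"
    using Aut_homS_inv_arr[OF inv_arr_in_Aut[OF g] X Xg inv_arr_in_homS_exp_act[OF g X]]
      inv_arr_inv_arr[OF g] by simp
  ultimately show "comp C g e \<in> homS A X"
    using homS_comp[OF A] X Xg fibreD by blast
next
  assume "comp C g e \<in> homS A X"
  then have "comp C (inv_arr C g) (comp C g e) \<in> homS A (act F X g)"
    using homS_comp[OF A] inv_arr_in_homS_exp_act[OF g X] exp_act_in_fibre[OF g X] X fibreD by blast
  then show "e \<in> homS A (act F X g)"
    using inv_arr_comp_cancel[OF g e] by simp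
qed

lemma exp_act_preimage_eq_Union:
  assumes A: "A \<in> ObS" and e: "e \<in> hom C (U A) F"
  shows "{(g, X) \<in> Aut C F \<times> fibre ObS U F. e \<in> homS A (act F X g)}
    = (\<Union>e' \<in> hom C (U A) F. {g \<in> Aut C F. comp C g e = e'} \<times> {Y \<in> fibre ObS U F. e' \<in> homS A Y})"
  using homS_exp_act_iff[OF _ _ A e] comp_in_hom[OF e] Aut_in_hom by fastforce

lemma continuous_map_exp_act:
  "continuous_map (prod_topology (tau C Fin F) (sigma C Fin ObS homS U F)) (sigma C Fin ObS homS U F)
     (\<lambda>(g, X). act F X g)"
proof -
  let ?T = "prod_topology (tau C Fin F) (sigma C Fin ObS homS U F)" and ?f = "\<lambda>(g, X). act F X g"
  have topspace_T: "topspace ?T = Aut C F \<times> fibre ObS U F"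
    by (simp add: topspace_tau topspace_sigma)
  have "continuous_map ?T (topology_generated_by (insert (fibre ObS U F)
      {{Y \<in> fibre ObS U F. e \<in> homS X Y} | X e. X \<in> ObS \<and> U X \<in> Fin \<and> e \<in> hom C (U X) F})) ?f"
  proof (rule continuous_on_generated_topo)
    show "?f ` topspace ?T \<subseteq> \<Union> (insert (fibre ObS U F)
      {{Y \<in> fibre ObS U F. e \<in> homS X Y} | X e. X \<in> ObS \<and> U X \<in> Fin \<and> e \<in> hom C (U X) F})"
      using topspace_T exp_act_in_fibre by auto
    fix V
    assume "V \<in> insert (fibre ObS U F)
      {{Y \<in> fibre ObS U F. e \<in> homS X Y} | X e. X \<in> ObS \<and> U X \<in> Fin \<and> e \<in> hom C (U X) F}"
    then consider "V = fibre ObS U F"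
      | A e where "V = {Y \<in> fibre ObS U F. e \<in> homS A Y}" "A \<in> ObS" "U A \<in> Fin" "e \<in> hom C (U A) F"
      by blast
    then show "openin ?T (?f -` V \<inter> topspace ?T)"
    proof cases
      case 1
      then have "?f -` V \<inter> topspace ?T = topspace ?T"
        using topspace_T exp_act_in_fibre by auto
      then show ?thesis
        by (metis openin_topspace)
    next
      case (2 A e)
      have "openin ?T ({g \<in> Aut C F. comp C g e = e'} \<times> {Y \<in> fibre ObS U F. e' \<in> homS A Y})"
        if "e' \<in> hom C (U A) F" for e'
        using openin_tau_basic[OF 2(3,4) that] openin_sigma_basic[where U = U and homS = homS, OF 2(2,3) that]
        by (simp add: openin_prod_Times_iff)
      then have "openin ?T
          (\<Union>e' \<in> hom C (U A) F. {g \<in> Aut C F. comp C g e = e'} \<times> {Y \<in> fibre ObS U F. e' \<in> homS A Y})"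
        by (intro openin_Union) blast
      moreover have "?f -` V \<inter> topspace ?T
          = (\<Union>e' \<in> hom C (U A) F. {g \<in> Aut C F. comp C g e = e'} \<times> {Y \<in> fibre ObS U F. e' \<in> homS A Y})"
        using 2 topspace_T exp_act_in_fibre exp_act_preimage_eq_Union[of A e F, symmetric] by auto
      ultimately show ?thesis
        by simp
    qed
  qed
  then show ?thesis
    unfolding sigma_def[of C Fin ObS homS U F] .
qed

end

theorem proposition5p9:
  fixes C :: "('o, 'm) cat" and Fin :: "'o set"
    and ObS :: "'p set" and homS :: "'p \<Rightarrow> 'p \<Rightarrow> 'm set" and U :: "'p \<Rightarrow> 'o"
    and F :: 'o
  assumes "category C"
    and "conditions_C1_C5 C Fin"
    and "expansion C ObS homS U"
    and "reasonable C ObS homS U"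
    and "precompact Fin ObS U"
    and "unique_restrictions C ObS homS U"
    and "F \<in> Ob C"
    and "locally_finite C Fin F"
  shows "(\<forall>g \<in> Aut C F. \<forall>X \<in> fibre ObS U F. exp_act C ObS homS U F X g \<in> fibre ObS U F)
    \<and> (\<forall>X \<in> fibre ObS U F. exp_act C ObS homS U F X (ident C F) = X)
    \<and> (\<forall>g \<in> Aut C F. \<forall>h \<in> Aut C F. \<forall>X \<in> fibre ObS U F.
         exp_act C ObS homS U F (exp_act C ObS homS U F X g) h = exp_act C ObS homS U F X (comp C g h))
    \<and> continuous_map (prod_topology (tau C Fin F) (sigma C Fin ObS homS U F)) (sigma C Fin ObS homS U F)
         (\<lambda>(g, X). exp_act C ObS homS U F X g)"
proof -
  interpret reasonable_expansion C ObS homS U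
    using assms by unfold_locales
  show ?thesis
    using exp_act_in_fibre exp_act_ident exp_act_comp continuous_map_exp_act by blast
qed

end
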